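(* For any simple directed graph $\mathbb G$ with $n\ge 2$ vertices and $m$ arcs, $a(\mathbb G)\le \frac{m}{n-1}$.
   Context: A simple directed graph has no self-arcs and no repeated arcs. The (in-degree) Laplacian of $\mathbb G$ on $\{1,\dots,n\}$ is $L=D-A$, $D$ the diagonal matrix of in-degrees, $A_{ij}=1$ if $(j,i)$ is an arc and $0$ otherwise. $a(\mathbb G)$ is the second smallest real part among the $n$ eigenvalues of $L$ counted with algebraic multiplicity. *)

theory Defs
  imports "Jordan_Normal_Form.Char_Poly" "HOL-Computational_Algebra.Fundamental_Theorem_Algebra"
begin

text \<open>A simple directed graph on vertex set {0..<n}: a set of arcs (j,i) (arc from j to i),
  all within the vertex set, without self-arcs. Being a set, there are no repeated arcs.\<close>
definition simple_digraph :: "nat \<Rightarrow> (nat \<times> nat) set \<Rightarrow> bool" where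
  "simple_digraph n E \<longleftrightarrow> E \<subseteq> {0..<n} \<times> {0..<n} \<and> (\<forall>i. (i, i) \<notin> E)"

definition in_degree :: "(nat \<times> nat) set \<Rightarrow> nat \<Rightarrow> nat" where
  "in_degree E i = card {j. (j, i) \<in> E}"

definition laplacian :: "nat \<Rightarrow> (nat \<times> nat) set \<Rightarrow> complex mat" where
  "laplacian n E = mat n n (\<lambda>(i, j).
      (if i = j then of_nat (in_degree E i) else 0) - (if (j, i) \<in> E then 1 else 0))"

definition eigenvalues_mset :: "complex mat \<Rightarrow> complex multiset" where
  "eigenvalues_mset A = proots (char_poly A)"

text \<open>a(G): second smallest real part among the n eigenvalues counted with multiplicity.\<close>
definition alg_conn :: "nat \<Rightarrow> (nat \<times> nat) set \<Rightarrow> real" where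
  "alg_conn n E = sorted_list_of_multiset (image_mset Re (eigenvalues_mset (laplacian n E))) ! 1"

end

theory Submission
  imports Defs "Jordan_Normal_Form.Schur_Decomposition"
begin

(* The all-ones vector lies in the kernel of L, since every row of L sums to zero, so 0 is an
   eigenvalue; and the eigenvalues sum to trace L = m. Sort the real parts of the eigenvalues. If
   the second one, a(G), is positive, then the smallest one is the eigenvalue 0 and the remaining
   n - 1 are all at least a(G), so (n - 1) a(G) <= m; otherwise a(G) <= 0 <= m / (n - 1). *)

definition trace :: "'a :: comm_monoid_add mat \<Rightarrow> 'a" where
  "trace A = (\<Sum>i<dim_row A. A $$ (i, i))"

lemma trace_eq_sum_list_diag_mat: "trace A = sum_list (diag_mat A)"
  by (simp add: trace_def diag_mat_def sum_list_sum_nth atLeast0LessThan)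

lemma trace_mult_comm:
  fixes A B :: "'a :: comm_semiring_0 mat"
  assumes A: "A \<in> carrier_mat n m" and B: "B \<in> carrier_mat m n"
  shows "trace (A * B) = trace (B * A)"
proof -
  have "trace (A * B) = (\<Sum>i<n. \<Sum>k<m. A $$ (i, k) * B $$ (k, i))"
    using A B by (auto simp: trace_def scalar_prod_def atLeast0LessThan intro!: sum.cong)
  also have "\<dots> = (\<Sum>k<m. \<Sum>i<n. B $$ (k, i) * A $$ (i, k))"
    by (subst sum.swap) (simp add: mult.commute)
  also have "\<dots> = trace (B * A)"
    using A B by (auto simp: trace_def scalar_prod_def atLeast0LessThan intro!: sum.cong)
  finally show ?thesis .
qed

lemma trace_similar_mat_wit:
  fixes A B :: "'a :: comm_semiring_1 mat"
  assumes "similar_mat_wit A B P Q"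
  shows "trace A = trace B"
proof -
  obtain n where P: "P \<in> carrier_mat n n" and Q: "Q \<in> carrier_mat n n"
    and B: "B \<in> carrier_mat n n" and QP: "Q * P = 1\<^sub>m n" and AB: "A = P * B * Q"
    using assms unfolding similar_mat_wit_def Let_def by auto
  have "trace A = trace (Q * (P * B))"
    unfolding AB using P B Q by (intro trace_mult_comm) auto
  also have "Q * (P * B) = B"
    using P B Q QP by (simp flip: assoc_mult_mat)
  finally show ?thesis .
qed

lemma proots_prod_list_linear_factors:
  "proots (\<Prod>a\<leftarrow>as. [:- a, 1:]) = mset (as :: 'a :: idom list)"
proof (induction as)
  case (Cons a as)
  have "(\<Prod>a\<leftarrow>as. [:- a, 1:]) \<noteq> 0"
    by auto
  then have "proots ([:- a, 1:] * (\<Prod>a\<leftarrow>as. [:- a, 1:])) = add_mset a (mset as)"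
    using Cons.IH by (subst proots_mult) auto
  then show ?case
    by (simp only: list.map prod_list.Cons mset.simps)
qed simp

lemma size_proots_char_poly:
  fixes A :: "complex mat"
  assumes "A \<in> carrier_mat n n"
  shows "size (proots (char_poly A)) = n"
  using char_poly_factorized[OF assms] by (auto simp: proots_prod_list_linear_factors)

lemma sum_proots_char_poly_eq_trace:
  fixes A :: "complex mat"
  assumes A: "A \<in> carrier_mat n n"
  shows "sum_mset (proots (char_poly A)) = trace A"
proof -
  obtain es where es: "char_poly A = (\<Prod>a\<leftarrow>es. [:- a, 1:])"
    using char_poly_factorized[OF A] by blast
  obtain B P Q where "schur_decomposition A es = (B, P, Q)"
    by (cases "schur_decomposition A es")
  with schur_decomposition[OF A es]
  have "similar_mat_wit A B P Q" and "diag_mat B = es" by auto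
  then have "trace A = sum_list es"
    using trace_similar_mat_wit trace_eq_sum_list_diag_mat by metis
  then show ?thesis
    by (simp add: es proots_prod_list_linear_factors sum_mset_sum_list)
qed

lemma eigenvalue_in_proots_char_poly:
  fixes A :: "'a :: field mat"
  assumes A: "A \<in> carrier_mat n n" and "eigenvalue A e"
  shows "e \<in># proots (char_poly A)"
proof -
  have "char_poly A \<noteq> 0"
    using degree_monic_char_poly[OF A] by auto
  then show ?thesis
    using assms eigenvalue_root_char_poly[OF A] by simp
qed

lemma eigenvalue_0_if_row_sums_zero:
  fixes A :: "'a :: field mat"
  assumes A: "A \<in> carrier_mat n n" and "n > 0"
    and row_sums: "\<And>i. i < n \<Longrightarrow> (\<Sum>j<n. A $$ (i, j)) = 0"
  shows "eigenvalue A 0"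
proof -
  let ?one = "vec n (\<lambda>_. 1) :: 'a vec"
  have "A *\<^sub>v ?one = 0 \<cdot>\<^sub>v ?one"
    using A row_sums by (intro eq_vecI) (auto simp: scalar_prod_def atLeast0LessThan)
  moreover have "?one \<noteq> 0\<^sub>v n"
    using \<open>n > 0\<close> by (metis index_vec index_zero_vec(1) zero_neq_one)
  ultimately show ?thesis
    unfolding eigenvalue_def eigenvector_def using A by (intro exI[of _ ?one]) auto
qed

lemma sorted_list_of_multiset_nth_1_le:
  fixes M :: "real multiset"
  assumes "size M \<ge> 2" and "0 \<in># M" and "sum_mset M \<ge> 0"
  shows "sorted_list_of_multiset M ! 1 \<le> sum_mset M / (real (size M) - 1)"
proof (cases "sorted_list_of_multiset M ! 1 \<le> 0")
  case True
  moreover have "sum_mset M / (real (size M) - 1) \<ge> 0"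
    using assms by simp
  ultimately show ?thesis
    by linarith
next
  case False
  obtain a b ys where xs: "sorted_list_of_multiset M = a # b # ys"
    using assms(1) by (metis Suc_le_length_iff numeral_2_eq_2 size_mset mset_sorted_list_of_multiset)
  have "sorted (a # b # ys)"
    by (metis xs sorted_sorted_list_of_multiset)
  then have ys_ge: "\<forall>y \<in> set ys. b \<le> y"
    by auto
  have "b > 0"
    using False xs by simp
  have "0 \<in> set (a # b # ys)"
    using assms(2) by (metis xs set_sorted_list_of_multiset)
  with \<open>b > 0\<close> ys_ge have "a = 0"
    by fastforce
  have "real (length ys) * b \<le> sum_list ys"
    using ys_ge by (induction ys) (auto simp: algebra_simps)
  moreover have "M = mset (a # b # ys)"
    by (metis xs mset_sorted_list_of_multiset)
  ultimately have "(real (size M) - 1) * b \<le> sum_mset M"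
    using \<open>a = 0\<close> by (simp add: sum_mset_sum_list algebra_simps)
  then show ?thesis
    using xs assms(1) by (simp add: pos_le_divide_eq mult.commute)
qed

lemma Re_sum_mset: "Re (sum_mset M) = sum_mset (image_mset Re M)"
  by (induction M) auto

lemma card_eq_sum_in_degree:
  assumes "simple_digraph n E"
  shows "card E = (\<Sum>i<n. in_degree E i)"
proof -
  have fin: "finite E"
    using assms unfolding simple_digraph_def by (meson finite_SigmaI finite_atLeastLessThan finite_subset)
  have E: "E = (\<Union>i<n. {e \<in> E. snd e = i})"
    using assms unfolding simple_digraph_def by auto
  have "card E = (\<Sum>i<n. card {e \<in> E. snd e = i})"
    by (subst E, rule card_UN_disjoint) (use fin in auto)
  also have "\<dots> = (\<Sum>i<n. in_degree E i)"
  proof (rule sum.cong[OF refl])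
    fix i
    have "{e \<in> E. snd e = i} = (\<lambda>j. (j, i)) ` {j. (j, i) \<in> E}" by force
    then show "card {e \<in> E. snd e = i} = in_degree E i"
      unfolding in_degree_def by (simp add: card_image inj_on_def)
  qed
  finally show ?thesis .
qed

lemma laplacian_carrier_mat: "laplacian n E \<in> carrier_mat n n"
  by (simp add: laplacian_def)

lemma trace_laplacian:
  assumes "simple_digraph n E"
  shows "trace (laplacian n E) = of_nat (card E)"
  using assms card_eq_sum_in_degree[OF assms]
  by (simp add: trace_def laplacian_def simple_digraph_def)

lemma laplacian_row_sum:
  assumes "simple_digraph n E" and "i < n"
  shows "(\<Sum>j<n. laplacian n E $$ (i, j)) = 0"
proof -
  have "{j \<in> {..<n}. (j, i) \<in> E} = {j. (j, i) \<in> E}"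
    using assms unfolding simple_digraph_def by auto
  then show ?thesis
    using assms(2) by (simp add: laplacian_def sum_subtractf sum.If_cases Int_def conj_commute in_degree_def)
qed

theorem lemma2:
  fixes n :: nat and E :: "(nat \<times> nat) set"
  assumes "n \<ge> 2" and "simple_digraph n E"
  shows "alg_conn n E \<le> real (card E) / (real n - 1)"
proof -
  let ?ev = "eigenvalues_mset (laplacian n E)"
  have "eigenvalue (laplacian n E) 0"
    using assms by (auto intro!: eigenvalue_0_if_row_sums_zero[OF laplacian_carrier_mat] laplacian_row_sum)
  then have "0 \<in># ?ev"
    unfolding eigenvalues_mset_def by (rule eigenvalue_in_proots_char_poly[OF laplacian_carrier_mat])
  moreover have "size ?ev = n"
    unfolding eigenvalues_mset_def by (rule size_proots_char_poly[OF laplacian_carrier_mat])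
  moreover have "sum_mset (image_mset Re ?ev) = real (card E)"
    using sum_proots_char_poly_eq_trace[OF laplacian_carrier_mat] trace_laplacian[OF assms(2)]
    by (simp add: eigenvalues_mset_def flip: Re_sum_mset)
  ultimately show ?thesis
    using sorted_list_of_multiset_nth_1_le[of "image_mset Re ?ev"] assms(1)
    by (force simp: alg_conn_def)
qed

end
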